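(* For every $\pi\in S_n$, the lattice $G/\beta_\pi$ is a slim semimodular lattice of length $n$.
   Context: $G$ is the direct product of two chains $0=c_0\prec\dots\prec c_n$ and $0=d_0\prec\dots\prec d_n$, its elements written uniquely as $c_i\vee d_j$. A join-congruence is an equivalence relation compatible with $\vee$. For $\pi\in S_n$ (permutations of $\{1,\dots,n\}$), $\beta_\pi$ is the join, in the lattice of join-congruences of $(G;\vee)$, of the smallest join-congruences collapsing $\{c_{i-1}\vee d_{\pi(i)},c_i\vee d_{\pi(i)-1},c_i\vee d_{\pi(i)}\}$, $i=1,\dots,n$; the quotient join-semilattice $G/\beta_\pi$ is finite with $0$, hence a lattice. A finite lattice is slim if its join-irreducible elements (including $0$) contain no three-element antichain; semimodular means $a\prec b$ implies $a\vee c\preceq b\vee c$. *)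

theory Defs
  imports "HOL-Combinatorics.Permutations"
begin

section \<open>The grid G = chain {c_0..c_n} x chain {d_0..d_n}; c_i \<or> d_j is the pair (i,j)\<close>

definition grid :: "nat \<Rightarrow> (nat \<times> nat) set" where
  "grid n = {0..n} \<times> {0..n}"

definition gjoin :: "nat \<times> nat \<Rightarrow> nat \<times> nat \<Rightarrow> nat \<times> nat" where
  "gjoin x y = (max (fst x) (fst y), max (snd x) (snd y))"

definition join_cong :: "nat \<Rightarrow> ((nat \<times> nat) \<times> (nat \<times> nat)) set \<Rightarrow> bool" where
  "join_cong n \<theta> \<longleftrightarrow> equiv (grid n) \<theta> \<and>
     (\<forall>x y z. (x, y) \<in> \<theta> \<longrightarrow> z \<in> grid n \<longrightarrow> (gjoin x z, gjoin y z) \<in> \<theta>)"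

text \<open>theta collapses the i-th triple {c_(i-1) v d_pi(i), c_i v d_(pi(i)-1), c_i v d_pi(i)}.\<close>
definition collapses_triple :: "(nat \<Rightarrow> nat) \<Rightarrow> nat \<Rightarrow> ((nat \<times> nat) \<times> (nat \<times> nat)) set \<Rightarrow> bool" where
  "collapses_triple \<pi> i \<theta> \<longleftrightarrow>
     ((i - 1, \<pi> i), (i, \<pi> i)) \<in> \<theta> \<and> ((i, \<pi> i - 1), (i, \<pi> i)) \<in> \<theta>"

text \<open>beta_pi: the join (in the lattice of join-congruences) of the smallest join-congruences
  collapsing the triples, i.e. the smallest join-congruence collapsing all of them.\<close>
definition beta :: "nat \<Rightarrow> (nat \<Rightarrow> nat) \<Rightarrow> ((nat \<times> nat) \<times> (nat \<times> nat)) set" where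
  "beta n \<pi> = \<Inter> {\<theta>. join_cong n \<theta> \<and> (\<forall>i\<in>{1..n}. collapses_triple \<pi> i \<theta>)}"

text \<open>Quotient join-semilattice G/theta and its order: A \<le> B iff A \<or> B = B.\<close>
definition quot :: "nat \<Rightarrow> ((nat \<times> nat) \<times> (nat \<times> nat)) set \<Rightarrow> (nat \<times> nat) set set" where
  "quot n \<theta> = grid n // \<theta>"

definition quot_le :: "((nat \<times> nat) \<times> (nat \<times> nat)) set \<Rightarrow> (nat \<times> nat) set \<Rightarrow> (nat \<times> nat) set \<Rightarrow> bool" where
  "quot_le \<theta> A B \<longleftrightarrow> (\<exists>x\<in>A. \<exists>y\<in>B. (gjoin x y, y) \<in> \<theta>)"

definition is_lub :: "'a set \<Rightarrow> ('a \<Rightarrow> 'a \<Rightarrow> bool) \<Rightarrow> 'a \<Rightarrow> 'a \<Rightarrow> 'a \<Rightarrow> bool" where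
  "is_lub S le a b z \<longleftrightarrow> z \<in> S \<and> le a z \<and> le b z \<and> (\<forall>w\<in>S. le a w \<longrightarrow> le b w \<longrightarrow> le z w)"

definition is_glb :: "'a set \<Rightarrow> ('a \<Rightarrow> 'a \<Rightarrow> bool) \<Rightarrow> 'a \<Rightarrow> 'a \<Rightarrow> 'a \<Rightarrow> bool" where
  "is_glb S le a b z \<longleftrightarrow> z \<in> S \<and> le z a \<and> le z b \<and> (\<forall>w\<in>S. le w a \<longrightarrow> le w b \<longrightarrow> le w z)"

definition is_lattice :: "'a set \<Rightarrow> ('a \<Rightarrow> 'a \<Rightarrow> bool) \<Rightarrow> bool" where
  "is_lattice S le \<longleftrightarrow>
     (\<forall>a\<in>S. le a a) \<and>
     (\<forall>a\<in>S. \<forall>b\<in>S. le a b \<longrightarrow> le b a \<longrightarrow> a = b) \<and>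
     (\<forall>a\<in>S. \<forall>b\<in>S. \<forall>c\<in>S. le a b \<longrightarrow> le b c \<longrightarrow> le a c) \<and>
     (\<forall>a\<in>S. \<forall>b\<in>S. (\<exists>z. is_lub S le a b z) \<and> (\<exists>z. is_glb S le a b z))"

definition covers :: "'a set \<Rightarrow> ('a \<Rightarrow> 'a \<Rightarrow> bool) \<Rightarrow> 'a \<Rightarrow> 'a \<Rightarrow> bool" where
  "covers S le a b \<longleftrightarrow> a \<in> S \<and> b \<in> S \<and> le a b \<and> a \<noteq> b \<and>
     \<not> (\<exists>c\<in>S. le a c \<and> le c b \<and> c \<noteq> a \<and> c \<noteq> b)"

definition semimodular :: "'a set \<Rightarrow> ('a \<Rightarrow> 'a \<Rightarrow> bool) \<Rightarrow> bool" where
  "semimodular S le \<longleftrightarrow>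
     (\<forall>a b c u v. covers S le a b \<longrightarrow> c \<in> S \<longrightarrow> is_lub S le a c u \<longrightarrow> is_lub S le b c v \<longrightarrow>
        u = v \<or> covers S le u v)"

text \<open>Join-irreducible elements, including 0 (x = y \<or> z implies x = y or x = z).\<close>
definition join_irreducibles :: "'a set \<Rightarrow> ('a \<Rightarrow> 'a \<Rightarrow> bool) \<Rightarrow> 'a set" where
  "join_irreducibles S le = {x\<in>S. \<forall>y\<in>S. \<forall>z\<in>S. is_lub S le y z x \<longrightarrow> x = y \<or> x = z}"

definition slim :: "'a set \<Rightarrow> ('a \<Rightarrow> 'a \<Rightarrow> bool) \<Rightarrow> bool" where
  "slim S le \<longleftrightarrow> \<not> (\<exists>a\<in>join_irreducibles S le. \<exists>b\<in>join_irreducibles S le.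
       \<exists>c\<in>join_irreducibles S le.
       a \<noteq> b \<and> a \<noteq> c \<and> b \<noteq> c \<and>
       \<not> le a b \<and> \<not> le b a \<and> \<not> le a c \<and> \<not> le c a \<and> \<not> le b c \<and> \<not> le c b)"

definition is_chain_in :: "'a set \<Rightarrow> ('a \<Rightarrow> 'a \<Rightarrow> bool) \<Rightarrow> 'a set \<Rightarrow> bool" where
  "is_chain_in S le C \<longleftrightarrow> C \<subseteq> S \<and> (\<forall>a\<in>C. \<forall>b\<in>C. le a b \<or> le b a)"

definition lattice_length :: "'a set \<Rightarrow> ('a \<Rightarrow> 'a \<Rightarrow> bool) \<Rightarrow> nat" where
  "lattice_length S le = Max {card C - 1 | C. is_chain_in S le C}"

end

theory Submission
  imports Defs
begin

text \<open>The map \<open>(a, b) \<mapsto> {k \<in> {1..n}. k \<le> a \<or> \<pi> k \<le> b}\<close> turns joins of \<open>G\<close> into unions,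
  and its kernel is \<open>\<beta>\<^sub>\<pi>\<close>. It collapses the triples; conversely, moving a point right or up
  along pairs that every triple-collapsing join-congruence collapses ends in a saturated point,
  which is the componentwise largest point with the same image. So \<open>G/\<beta>\<^sub>\<pi>\<close> is isomorphic to
  the union-closed family of these index sets ordered by inclusion. There a cover adds exactly
  one index (semimodularity); every set is the union of a column set \<open>{1..a}\<close> and a row set, so
  the join-irreducibles lie in two chains (slimness); and the column sets form a chain of length
  \<open>n\<close> in \<open>Pow {1..n}\<close>.\<close>

section \<open>Transfer along order isomorphisms\<close>

lemma semimodular_iff_bounded:
  "semimodular S le \<longleftrightarrow>
     (\<forall>a\<in>S. \<forall>b\<in>S. \<forall>c\<in>S. \<forall>u\<in>S. \<forall>v\<in>S. covers S le a b \<longrightarrow> is_lub S le a c u \<longrightarrow>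
        is_lub S le b c v \<longrightarrow> u = v \<or> covers S le u v)"
  unfolding semimodular_def covers_def is_lub_def by blast

lemma ex_is_lub_iff_Bex: "(\<exists>z. is_lub S le a b z) \<longleftrightarrow> (\<exists>z\<in>S. is_lub S le a b z)"
  by (auto simp: is_lub_def)

lemma ex_is_glb_iff_Bex: "(\<exists>z. is_glb S le a b z) \<longleftrightarrow> (\<exists>z\<in>S. is_glb S le a b z)"
  by (auto simp: is_glb_def)

locale order_iso =
  fixes S :: "'a set" and le :: "'a \<Rightarrow> 'a \<Rightarrow> bool"
    and T :: "'b set" and le' :: "'b \<Rightarrow> 'b \<Rightarrow> bool"
    and f :: "'a \<Rightarrow> 'b"
  assumes bij: "bij_betw f S T"
    and le'_iff: "a \<in> S \<Longrightarrow> b \<in> S \<Longrightarrow> le' (f a) (f b) \<longleftrightarrow> le a b"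
begin

lemma f_image: "f ` S = T"
  using bij by (simp add: bij_betw_def)

lemma Ball_T: "(\<forall>w\<in>T. P w) \<longleftrightarrow> (\<forall>v\<in>S. P (f v))"
  by (simp flip: f_image)

lemma Bex_T: "(\<exists>w\<in>T. P w) \<longleftrightarrow> (\<exists>v\<in>S. P (f v))"
  by (simp flip: f_image)

lemma f_in_T: "a \<in> S \<Longrightarrow> f a \<in> T"
  by (simp flip: f_image)

lemma f_eq_iff: "a \<in> S \<Longrightarrow> b \<in> S \<Longrightarrow> f a = f b \<longleftrightarrow> a = b"
  using bij by (auto simp: bij_betw_def inj_on_def)

lemma is_lub_iff:
  "a \<in> S \<Longrightarrow> b \<in> S \<Longrightarrow> z \<in> S \<Longrightarrow> is_lub T le' (f a) (f b) (f z) \<longleftrightarrow> is_lub S le a b z"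
  unfolding is_lub_def Ball_T by (simp add: f_in_T le'_iff)

lemma is_glb_iff:
  "a \<in> S \<Longrightarrow> b \<in> S \<Longrightarrow> z \<in> S \<Longrightarrow> is_glb T le' (f a) (f b) (f z) \<longleftrightarrow> is_glb S le a b z"
  unfolding is_glb_def Ball_T by (simp add: f_in_T le'_iff)

lemma ex_lub_iff: "a \<in> S \<Longrightarrow> b \<in> S \<Longrightarrow> (\<exists>z. is_lub T le' (f a) (f b) z) \<longleftrightarrow> (\<exists>z. is_lub S le a b z)"
  unfolding ex_is_lub_iff_Bex Bex_T using is_lub_iff by blast

lemma ex_glb_iff: "a \<in> S \<Longrightarrow> b \<in> S \<Longrightarrow> (\<exists>z. is_glb T le' (f a) (f b) z) \<longleftrightarrow> (\<exists>z. is_glb S le a b z)"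
  unfolding ex_is_glb_iff_Bex Bex_T using is_glb_iff by blast

lemma is_lattice_iff: "is_lattice T le' \<longleftrightarrow> is_lattice S le"
  unfolding is_lattice_def Ball_T by (simp add: f_in_T le'_iff f_eq_iff ex_lub_iff ex_glb_iff)

lemma covers_iff: "a \<in> S \<Longrightarrow> b \<in> S \<Longrightarrow> covers T le' (f a) (f b) \<longleftrightarrow> covers S le a b"
  unfolding covers_def Bex_T by (simp add: f_in_T le'_iff f_eq_iff)

lemma semimodular_iff: "semimodular T le' \<longleftrightarrow> semimodular S le"
  unfolding semimodular_iff_bounded Ball_T by (simp add: f_in_T f_eq_iff is_lub_iff covers_iff)

lemma in_join_irreducibles_iff:
  "a \<in> S \<Longrightarrow> f a \<in> join_irreducibles T le' \<longleftrightarrow> a \<in> join_irreducibles S le"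
  unfolding join_irreducibles_def Ball_T by (simp add: f_in_T f_eq_iff is_lub_iff)

lemma join_irreducibles_image: "join_irreducibles T le' = f ` join_irreducibles S le"
proof -
  have "join_irreducibles T le' = f ` {v \<in> S. f v \<in> join_irreducibles T le'}"
    using f_image by (auto simp: join_irreducibles_def)
  also have "{v \<in> S. f v \<in> join_irreducibles T le'} = join_irreducibles S le"
    using in_join_irreducibles_iff join_irreducibles_def[of S le] by blast
  finally show ?thesis .
qed

lemma slim_iff: "slim T le' \<longleftrightarrow> slim S le"
  unfolding slim_def join_irreducibles_image
  by (simp add: join_irreducibles_def f_in_T f_eq_iff le'_iff)

lemma chain_image_iff: "C \<subseteq> S \<Longrightarrow> is_chain_in T le' (f ` C) \<longleftrightarrow> is_chain_in S le C"
  unfolding is_chain_in_def by (auto simp: f_in_T le'_iff subset_iff)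

lemma lattice_length_eq: "lattice_length T le' = lattice_length S le"
proof -
  have card_image: "C \<subseteq> S \<Longrightarrow> card (f ` C) = card C" for C
    using bij by (meson bij_betw_def card_image inj_on_subset)
  have "{card D - 1 | D. is_chain_in T le' D} = {card (f ` C) - 1 | C. C \<subseteq> S \<and> is_chain_in T le' (f ` C)}"
    by (auto simp: is_chain_in_def subset_image_iff simp flip: f_image)
  also have "\<dots> = {card C - 1 | C. is_chain_in S le C}"
  proof (intro Collect_cong ex_cong1)
    fix k C
    have "C \<subseteq> S \<and> is_chain_in T le' (f ` C) \<longleftrightarrow> is_chain_in S le C"
      using chain_image_iff is_chain_in_def[of S] by blast
    then show "(k = card (f ` C) - 1 \<and> C \<subseteq> S \<and> is_chain_in T le' (f ` C)) \<longleftrightarrow>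
        (k = card C - 1 \<and> is_chain_in S le C)"
      using card_image by auto
  qed
  finally show ?thesis unfolding lattice_length_def by simp
qed

end

section \<open>Union-closed families of sets\<close>

lemma is_lub_subset_iff:
  assumes "X \<union> Y \<in> L"
  shows "is_lub L (\<subseteq>) X Y U \<longleftrightarrow> U = X \<union> Y"
  using assms unfolding is_lub_def by blast

lemma Union_mem_if_union_closed:
  assumes union: "\<And>X Y. X \<in> L \<Longrightarrow> Y \<in> L \<Longrightarrow> X \<union> Y \<in> L"
  shows "finite F \<Longrightarrow> F \<noteq> {} \<Longrightarrow> F \<subseteq> L \<Longrightarrow> \<Union>F \<in> L"
  by (induction F rule: finite_ne_induct) (auto intro: union)

lemma is_lattice_if_union_closed:
  assumes "finite L" and "{} \<in> L" and union: "\<And>X Y. X \<in> L \<Longrightarrow> Y \<in> L \<Longrightarrow> X \<union> Y \<in> L"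
  shows "is_lattice L (\<subseteq>)"
proof -
  have lub: "is_lub L (\<subseteq>) X Y (X \<union> Y)" if "X \<in> L" "Y \<in> L" for X Y
    using is_lub_subset_iff[OF union[OF that]] by simp
  have glb: "is_glb L (\<subseteq>) X Y (\<Union>{W \<in> L. W \<subseteq> X \<and> W \<subseteq> Y})" for X Y
  proof -
    have "finite {W \<in> L. W \<subseteq> X \<and> W \<subseteq> Y}" "{} \<in> {W \<in> L. W \<subseteq> X \<and> W \<subseteq> Y}"
      using assms(1,2) by auto
    then have "\<Union>{W \<in> L. W \<subseteq> X \<and> W \<subseteq> Y} \<in> L"
      by (intro Union_mem_if_union_closed[OF union]) auto
    then show ?thesis unfolding is_glb_def by blast
  qed
  show ?thesis
    unfolding is_lattice_def using lub glb by blast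
qed

lemma semimodular_if_covers_insert:
  assumes union: "\<And>X Y. X \<in> L \<Longrightarrow> Y \<in> L \<Longrightarrow> X \<union> Y \<in> L"
    and covers_insert: "\<And>X Y. covers L (\<subseteq>) X Y \<Longrightarrow> \<exists>k. Y = insert k X"
  shows "semimodular L (\<subseteq>)"
  unfolding semimodular_def
proof (intro allI impI)
  fix X Y Z U V
  assume XY: "covers L (\<subseteq>) X Y" and "Z \<in> L"
    and lubs: "is_lub L (\<subseteq>) X Z U" "is_lub L (\<subseteq>) Y Z V"
  have "X \<in> L" "Y \<in> L" using XY by (auto simp: covers_def)
  then have "X \<union> Z \<in> L" "Y \<union> Z \<in> L" using union \<open>Z \<in> L\<close> by auto
  then have U: "U = X \<union> Z" and V: "V = Y \<union> Z"
    using lubs by (simp_all add: is_lub_subset_iff)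
  obtain k where "Y = insert k X" using covers_insert[OF XY] by blast
  then have "V = insert k U" using U V by auto
  moreover have "U \<in> L" "V \<in> L" using U V \<open>X \<union> Z \<in> L\<close> \<open>Y \<union> Z \<in> L\<close> by auto
  ultimately show "U = V \<or> covers L (\<subseteq>) U V"
    by (cases "k \<in> U") (auto simp: covers_def subset_insert_iff insert_absorb)
qed

lemma join_irreducibles_subset_if_decomposed:
  assumes "A \<subseteq> S" "B \<subseteq> S" and decomposed: "\<And>x. x \<in> S \<Longrightarrow> \<exists>a\<in>A. \<exists>b\<in>B. is_lub S le a b x"
  shows "join_irreducibles S le \<subseteq> A \<union> B"
proof
  fix x assume x: "x \<in> join_irreducibles S le"
  then obtain a b where "a \<in> A" "b \<in> B" "is_lub S le a b x"
    using decomposed[of x] by (auto simp: join_irreducibles_def)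
  with x assms(1,2) have "x = a \<or> x = b"
    unfolding join_irreducibles_def by blast
  with \<open>a \<in> A\<close> \<open>b \<in> B\<close> show "x \<in> A \<union> B" by blast
qed

lemma slim_if_join_irreducibles_in_two_chains:
  assumes "is_chain_in S le A" "is_chain_in S le B"
    and JI: "join_irreducibles S le \<subseteq> A \<union> B"
  shows "slim S le"
proof -
  have "le x y \<or> le y x" if "x \<in> A \<and> y \<in> A \<or> x \<in> B \<and> y \<in> B" for x y
    using assms(1,2) that unfolding is_chain_in_def by blast
  then show ?thesis
    unfolding slim_def using JI by (metis Un_iff subsetD)
qed

lemma card_chain_of_subsets_le:
  assumes "finite A" "L \<subseteq> Pow A" "is_chain_in L (\<subseteq>) C"
  shows "card C \<le> card A + 1"
proof -
  have C: "C \<subseteq> Pow A" "\<And>X Y. X \<in> C \<Longrightarrow> Y \<in> C \<Longrightarrow> X \<subseteq> Y \<or> Y \<subseteq> X"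
    using assms by (auto simp: is_chain_in_def)
  have "inj_on card C"
  proof (rule inj_onI)
    fix X Y assume "X \<in> C" "Y \<in> C" "card X = card Y"
    then show "X = Y"
      using C assms(1) by (metis PowD card_subset_eq finite_subset subsetD)
  qed
  moreover have "card ` C \<subseteq> {0..card A}"
    using C(1) by (auto intro!: card_mono[OF assms(1)])
  ultimately have "card C \<le> card {0..card A}"
    by (intro card_inj_on_le) auto
  then show ?thesis by simp
qed

lemma lattice_length_subsets_eq:
  assumes "finite A" "L \<subseteq> Pow A" "is_chain_in L (\<subseteq>) C" "card C = card A + 1"
  shows "lattice_length L (\<subseteq>) = card A"
proof -
  let ?M = "{card C - 1 | C. is_chain_in L (\<subseteq>) C}"
  have bounded: "\<forall>k\<in>?M. k \<le> card A"
    using card_chain_of_subsets_le[OF assms(1,2)] by fastforce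
  then have "finite ?M"
    using finite_nat_set_iff_bounded_le by blast
  moreover have "card A \<in> ?M"
    using assms(3,4) by force
  ultimately show ?thesis
    unfolding lattice_length_def using bounded by (intro Max_eqI) auto
qed

section \<open>The index-set representation of \<open>G/\<beta>\<^sub>\<pi>\<close>\<close>

definition index_set :: "nat \<Rightarrow> (nat \<Rightarrow> nat) \<Rightarrow> nat \<times> nat \<Rightarrow> nat set" where
  "index_set n \<pi> x = {k \<in> {1..n}. k \<le> fst x \<or> \<pi> k \<le> snd x}"

definition index_kernel :: "nat \<Rightarrow> (nat \<Rightarrow> nat) \<Rightarrow> ((nat \<times> nat) \<times> (nat \<times> nat)) set" where
  "index_kernel n \<pi> = {(x, y). x \<in> grid n \<and> y \<in> grid n \<and> index_set n \<pi> x = index_set n \<pi> y}"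

text \<open>Both a step right and a step up would enlarge the index set: neither \<open>a + 1\<close> nor
  \<open>inv \<pi> (b + 1)\<close> belongs to it yet.\<close>

definition saturated :: "nat \<Rightarrow> (nat \<Rightarrow> nat) \<Rightarrow> nat \<times> nat \<Rightarrow> bool" where
  "saturated n \<pi> x \<longleftrightarrow>
     (fst x = n \<or> snd x < \<pi> (Suc (fst x))) \<and> (snd x = n \<or> fst x < inv \<pi> (Suc (snd x)))"

lemma gjoin_in_grid: "x \<in> grid n \<Longrightarrow> y \<in> grid n \<Longrightarrow> gjoin x y \<in> grid n"
  unfolding grid_def gjoin_def by auto

lemma index_set_gjoin: "index_set n \<pi> (gjoin x y) = index_set n \<pi> x \<union> index_set n \<pi> y"
  unfolding index_set_def gjoin_def by auto

lemma index_set_mono: "a \<le> a' \<Longrightarrow> b \<le> b' \<Longrightarrow> index_set n \<pi> (a, b) \<subseteq> index_set n \<pi> (a', b')"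
  unfolding index_set_def by auto

lemma index_set_subset: "index_set n \<pi> x \<subseteq> {1..n}"
  unfolding index_set_def by auto

lemma index_set_decompose: "index_set n \<pi> (a, b) = index_set n \<pi> (a, 0) \<union> index_set n \<pi> (0, b)"
  unfolding index_set_def by auto

lemma index_set_right_step:
  "a < n \<Longrightarrow> index_set n \<pi> (Suc a, b) = insert (Suc a) (index_set n \<pi> (a, b))"
  unfolding index_set_def by (auto simp: le_Suc_eq)

lemma join_cong_index_kernel: "join_cong n (index_kernel n \<pi>)"
  unfolding join_cong_def equiv_def refl_on_def sym_def trans_def index_kernel_def
  by (auto simp: index_set_gjoin gjoin_in_grid)

lemma index_kernel_right_step:
  assumes "a < n" "\<pi> (Suc a) \<le> b" "b \<le> n"
  shows "((a, b), (Suc a, b)) \<in> index_kernel n \<pi>"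
proof -
  have "Suc a \<in> index_set n \<pi> (a, b)" using assms by (simp add: index_set_def)
  then have "index_set n \<pi> (Suc a, b) = index_set n \<pi> (a, b)"
    using index_set_right_step[OF assms(1)] by (simp add: insert_absorb)
  then show ?thesis
    using assms by (simp add: index_kernel_def grid_def)
qed

lemma cong_contains_right_step:
  assumes "join_cong n \<theta>" "\<forall>i\<in>{1..n}. collapses_triple \<pi> i \<theta>"
    and "a < n" "\<pi> (Suc a) \<le> b" "b \<le> n"
  shows "((a, b), (Suc a, b)) \<in> \<theta>"
proof -
  have "((a, \<pi> (Suc a)), (Suc a, \<pi> (Suc a))) \<in> \<theta>"
    using assms(2)[rule_format, of "Suc a"] assms(3) by (simp add: collapses_triple_def)
  moreover have "(0, b) \<in> grid n" using assms(5) by (simp add: grid_def)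
  ultimately have "(gjoin (a, \<pi> (Suc a)) (0, b), gjoin (Suc a, \<pi> (Suc a)) (0, b)) \<in> \<theta>"
    using assms(1) unfolding join_cong_def by blast
  then show ?thesis using assms(4) by (simp add: gjoin_def max_def)
qed

lemma exists_saturated_equiv:
  assumes "equiv (grid n) \<theta>"
    and right: "\<And>a b. a < n \<Longrightarrow> \<pi> (Suc a) \<le> b \<Longrightarrow> b \<le> n \<Longrightarrow> ((a, b), (Suc a, b)) \<in> \<theta>"
    and up: "\<And>a b. b < n \<Longrightarrow> inv \<pi> (Suc b) \<le> a \<Longrightarrow> a \<le> n \<Longrightarrow> ((a, b), (a, Suc b)) \<in> \<theta>"
  shows "x \<in> grid n \<Longrightarrow> \<exists>s\<in>grid n. saturated n \<pi> s \<and> (x, s) \<in> \<theta>"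
proof (induction "(n - fst x) + (n - snd x)" arbitrary: x rule: less_induct)
  case less
  obtain a b where x: "x = (a, b)" "a \<le> n" "b \<le> n"
    using less.prems by (cases x) (auto simp: grid_def)
  have refl: "(x, x) \<in> \<theta>" and trans: "\<And>y z. (x, y) \<in> \<theta> \<Longrightarrow> (y, z) \<in> \<theta> \<Longrightarrow> (x, z) \<in> \<theta>"
    using assms(1) less.prems unfolding equiv_def refl_on_def trans_def by blast+
  consider "saturated n \<pi> x" | "a < n" "\<pi> (Suc a) \<le> b" | "b < n" "inv \<pi> (Suc b) \<le> a"
    using x by (force simp: saturated_def)
  then show ?case
  proof cases
    case 1
    then show ?thesis using refl less.prems by blast
  next
    case 2
    then have "(Suc a, b) \<in> grid n" "n - Suc a + (n - b) < n - fst x + (n - snd x)"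
      using x by (auto simp: grid_def)
    then obtain s where "s \<in> grid n" "saturated n \<pi> s" "((Suc a, b), s) \<in> \<theta>"
      using less.hyps[of "(Suc a, b)"] by auto
    then show ?thesis using right[OF 2] x trans by blast
  next
    case 3
    then have "(a, Suc b) \<in> grid n" "n - a + (n - Suc b) < n - fst x + (n - snd x)"
      using x by (auto simp: grid_def)
    then obtain s where "s \<in> grid n" "saturated n \<pi> s" "((a, Suc b), s) \<in> \<theta>"
      using less.hyps[of "(a, Suc b)"] by auto
    then show ?thesis using up[OF 3] x trans by blast
  qed
qed

abbreviation index_lattice :: "nat \<Rightarrow> (nat \<Rightarrow> nat) \<Rightarrow> nat set set" where
  "index_lattice n \<pi> \<equiv> index_set n \<pi> ` grid n"

definition index_fiber :: "nat \<Rightarrow> (nat \<Rightarrow> nat) \<Rightarrow> nat set \<Rightarrow> (nat \<times> nat) set" where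
  "index_fiber n \<pi> X = {x \<in> grid n. index_set n \<pi> x = X}"

lemma finite_index_lattice: "finite (index_lattice n \<pi>)"
  by (simp add: grid_def)

lemma index_lattice_subset_Pow: "index_lattice n \<pi> \<subseteq> Pow {1..n}"
  using index_set_subset by blast

lemma union_in_index_lattice:
  "X \<in> index_lattice n \<pi> \<Longrightarrow> Y \<in> index_lattice n \<pi> \<Longrightarrow> X \<union> Y \<in> index_lattice n \<pi>"
  by (auto simp flip: index_set_gjoin intro!: imageI gjoin_in_grid)

lemma index_lattice_column_chain:
  "is_chain_in (index_lattice n \<pi>) (\<subseteq>) ((\<lambda>a. index_set n \<pi> (a, 0)) ` {0..n})"
proof -
  have "index_set n \<pi> (a, 0) \<subseteq> index_set n \<pi> (a', 0) \<or> index_set n \<pi> (a', 0) \<subseteq> index_set n \<pi> (a, 0)"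
    for a a'
    using index_set_mono nat_le_linear order_refl by metis
  then show ?thesis unfolding is_chain_in_def grid_def by auto
qed

lemma index_lattice_row_chain:
  "is_chain_in (index_lattice n \<pi>) (\<subseteq>) ((\<lambda>b. index_set n \<pi> (0, b)) ` {0..n})"
proof -
  have "index_set n \<pi> (0, b) \<subseteq> index_set n \<pi> (0, b') \<or> index_set n \<pi> (0, b') \<subseteq> index_set n \<pi> (0, b)"
    for b b'
    using index_set_mono nat_le_linear order_refl by metis
  then show ?thesis unfolding is_chain_in_def grid_def by auto
qed

lemma join_irreducibles_index_lattice:
  "join_irreducibles (index_lattice n \<pi>) (\<subseteq>)
     \<subseteq> (\<lambda>a. index_set n \<pi> (a, 0)) ` {0..n} \<union> (\<lambda>b. index_set n \<pi> (0, b)) ` {0..n}"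
proof (rule join_irreducibles_subset_if_decomposed)
  fix X assume X: "X \<in> index_lattice n \<pi>"
  then obtain a b where ab: "a \<le> n" "b \<le> n" "X = index_set n \<pi> (a, b)"
    by (auto simp: grid_def)
  then have "is_lub (index_lattice n \<pi>) (\<subseteq>) (index_set n \<pi> (a, 0)) (index_set n \<pi> (0, b)) X"
    using X index_set_decompose[of n \<pi> a b] by (simp add: is_lub_subset_iff)
  with ab show "\<exists>A\<in>(\<lambda>a. index_set n \<pi> (a, 0)) ` {0..n}. \<exists>B\<in>(\<lambda>b. index_set n \<pi> (0, b)) ` {0..n}.
      is_lub (index_lattice n \<pi>) (\<subseteq>) A B X"
    by (intro bexI[of _ "index_set n \<pi> (a, 0)"] bexI[of _ "index_set n \<pi> (0, b)"]) auto
qed (auto simp: grid_def)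

lemma index_kernel_Image:
  "x \<in> grid n \<Longrightarrow> index_kernel n \<pi> `` {x} = index_fiber n \<pi> (index_set n \<pi> x)"
  unfolding index_kernel_def index_fiber_def by auto

lemma quotient_index_kernel: "grid n // index_kernel n \<pi> = index_fiber n \<pi> ` index_lattice n \<pi>"
  unfolding quotient_def by (auto simp: index_kernel_Image)

lemma quot_le_index_fiber:
  assumes "X \<in> index_lattice n \<pi>" "Y \<in> index_lattice n \<pi>"
  shows "quot_le (index_kernel n \<pi>) (index_fiber n \<pi> X) (index_fiber n \<pi> Y) \<longleftrightarrow> X \<subseteq> Y"
  using assms
  by (auto simp: quot_le_def index_fiber_def index_kernel_def index_set_gjoin gjoin_in_grid
      Un_absorb1 dest: sym[of "X \<union> Y"])

lemma order_iso_index_fiber: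
  "order_iso (index_lattice n \<pi>) (\<subseteq>) (grid n // index_kernel n \<pi>) (quot_le (index_kernel n \<pi>))
     (index_fiber n \<pi>)"
proof
  have "inj_on (index_fiber n \<pi>) (index_lattice n \<pi>)"
    by (rule inj_onI) (auto simp: index_fiber_def set_eq_iff)
  then show "bij_betw (index_fiber n \<pi>) (index_lattice n \<pi>) (grid n // index_kernel n \<pi>)"
    by (simp add: bij_betw_def quotient_index_kernel)
qed (rule quot_le_index_fiber)

context
  fixes n :: nat and \<pi> :: "nat \<Rightarrow> nat"
  assumes perm: "\<pi> permutes {1..n}"
begin

lemma perm_in_range: "k \<in> {1..n} \<Longrightarrow> \<pi> k \<in> {1..n}"
  using permutes_in_image[OF perm] by simp

lemma inv_perm_in_range: "k \<in> {1..n} \<Longrightarrow> inv \<pi> k \<in> {1..n}"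
  using permutes_in_image[OF permutes_inv[OF perm]] by simp

lemma perm_inv_perm [simp]: "\<pi> (inv \<pi> k) = k"
  using permutes_inverses(1)[OF perm] by simp

lemma inv_perm_perm [simp]: "inv \<pi> (\<pi> k) = k"
  using permutes_inverses(2)[OF perm] by simp

lemma index_set_column: "a \<le> n \<Longrightarrow> index_set n \<pi> (a, 0) = {1..a}"
  unfolding index_set_def using perm_in_range by fastforce

lemma index_set_up_step:
  assumes "b < n"
  shows "index_set n \<pi> (a, Suc b) = insert (inv \<pi> (Suc b)) (index_set n \<pi> (a, b))"
proof -
  have "inv \<pi> (Suc b) \<in> {1..n}" using assms inv_perm_in_range by simp
  moreover have "\<pi> k = Suc b \<longleftrightarrow> k = inv \<pi> (Suc b)" for k
    by (metis inv_perm_perm perm_inv_perm)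
  ultimately show ?thesis
    unfolding index_set_def by (auto simp: le_Suc_eq)
qed

lemma index_kernel_up_step:
  assumes "b < n" "inv \<pi> (Suc b) \<le> a" "a \<le> n"
  shows "((a, b), (a, Suc b)) \<in> index_kernel n \<pi>"
proof -
  have "inv \<pi> (Suc b) \<in> index_set n \<pi> (a, b)"
    using assms inv_perm_in_range[of "Suc b"] by (simp add: index_set_def)
  then have "index_set n \<pi> (a, Suc b) = index_set n \<pi> (a, b)"
    using index_set_up_step[OF assms(1)] by (simp add: insert_absorb)
  then show ?thesis
    using assms by (simp add: index_kernel_def grid_def)
qed

lemma cong_contains_up_step:
  assumes "join_cong n \<theta>" "\<forall>i\<in>{1..n}. collapses_triple \<pi> i \<theta>"
    and "b < n" "inv \<pi> (Suc b) \<le> a" "a \<le> n"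
  shows "((a, b), (a, Suc b)) \<in> \<theta>"
proof -
  let ?i = "inv \<pi> (Suc b)"
  have "?i \<in> {1..n}" using assms(3) inv_perm_in_range by simp
  then have "((?i, b), (?i, Suc b)) \<in> \<theta>"
    using assms(2) by (force simp: collapses_triple_def)
  moreover have "(a, 0) \<in> grid n" using assms(5) by (simp add: grid_def)
  ultimately have "(gjoin (?i, b) (a, 0), gjoin (?i, Suc b) (a, 0)) \<in> \<theta>"
    using assms(1) unfolding join_cong_def by blast
  then show ?thesis using assms(4) by (simp add: gjoin_def max_def)
qed

lemma collapses_triple_index_kernel:
  assumes "i \<in> {1..n}"
  shows "collapses_triple \<pi> i (index_kernel n \<pi>)"
proof -
  obtain j where i: "i = Suc j" "j < n" using assms by (cases i) auto
  obtain m where m: "\<pi> i = Suc m" "m < n" using perm_in_range[OF assms] by (cases "\<pi> i") auto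
  have "inv \<pi> (Suc m) = i" using m(1) inv_perm_perm by metis
  then show ?thesis
    using index_kernel_right_step[where a = j and b = "\<pi> i"]
      index_kernel_up_step[where b = m and a = i] i m
    by (simp add: collapses_triple_def)
qed

lemma saturated_greatest:
  assumes "saturated n \<pi> (a', b')" "a \<le> n" "b \<le> n"
    and "index_set n \<pi> (a, b) \<subseteq> index_set n \<pi> (a', b')"
  shows "a \<le> a' \<and> b \<le> b'"
proof (intro conjI; rule ccontr)
  assume "\<not> a \<le> a'"
  then have "Suc a' \<in> index_set n \<pi> (a, b)" using assms(2) by (simp add: index_set_def)
  then have "Suc a' \<in> index_set n \<pi> (a', b')" using assms(4) by blast
  then show False using assms(1,2) \<open>\<not> a \<le> a'\<close> by (auto simp: saturated_def index_set_def)
next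
  assume "\<not> b \<le> b'"
  then have "inv \<pi> (Suc b') \<in> index_set n \<pi> (a, b)"
    using assms(3) inv_perm_in_range[of "Suc b'"] by (simp add: index_set_def)
  then have "inv \<pi> (Suc b') \<in> index_set n \<pi> (a', b')" using assms(4) by blast
  then show False using assms(1,3) \<open>\<not> b \<le> b'\<close> by (auto simp: saturated_def index_set_def)
qed

lemma saturated_unique:
  assumes "s \<in> grid n" "t \<in> grid n" "saturated n \<pi> s" "saturated n \<pi> t"
    and "index_set n \<pi> s = index_set n \<pi> t"
  shows "s = t"
  using assms saturated_greatest[of "fst s" "snd s" "fst t" "snd t"]
    saturated_greatest[of "fst t" "snd t" "fst s" "snd s"]
  by (auto simp: grid_def prod_eq_iff)

lemma index_kernel_subset_cong:
  assumes "join_cong n \<theta>" "\<forall>i\<in>{1..n}. collapses_triple \<pi> i \<theta>"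
  shows "index_kernel n \<pi> \<subseteq> \<theta>"
proof (rule subrelI)
  fix x y assume xy: "(x, y) \<in> index_kernel n \<pi>"
  let ?\<theta> = "\<theta> \<inter> index_kernel n \<pi>"
  have \<theta>: "equiv (grid n) \<theta>" and "equiv (grid n) (index_kernel n \<pi>)"
    using assms(1) join_cong_index_kernel unfolding join_cong_def by blast+
  then have "equiv (grid n) ?\<theta>"
    unfolding equiv_def refl_on_def sym_def trans_def by blast
  txt \<open>Saturating inside \<open>\<theta> \<inter> index_kernel n \<pi>\<close> gives representatives that are
    \<open>\<theta>\<close>-related to the point and have its index set.\<close>
  then have saturate: "z \<in> grid n \<Longrightarrow> \<exists>s\<in>grid n. saturated n \<pi> s \<and> (z, s) \<in> ?\<theta>" for z
  proof (rule exists_saturated_equiv)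
    show "((a, b), (Suc a, b)) \<in> ?\<theta>" if "a < n" "\<pi> (Suc a) \<le> b" "b \<le> n" for a b
      using that assms index_kernel_right_step cong_contains_right_step by blast
    show "((a, b), (a, Suc b)) \<in> ?\<theta>" if "b < n" "inv \<pi> (Suc b) \<le> a" "a \<le> n" for a b
      using that assms index_kernel_up_step cong_contains_up_step by blast
  qed
  have "x \<in> grid n" "y \<in> grid n" using xy by (auto simp: index_kernel_def)
  then obtain s t where s: "s \<in> grid n" "saturated n \<pi> s" "(x, s) \<in> ?\<theta>"
    and t: "t \<in> grid n" "saturated n \<pi> t" "(y, t) \<in> ?\<theta>"
    using saturate by blast
  have "index_set n \<pi> s = index_set n \<pi> t"
    using xy s(3) t(3) by (simp add: index_kernel_def)
  then have "s = t" using saturated_unique s t by blast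
  then show "(x, y) \<in> \<theta>"
    using s(3) t(3) \<theta> unfolding equiv_def sym_def trans_def by blast
qed

lemma beta_eq_index_kernel: "beta n \<pi> = index_kernel n \<pi>"
  unfolding beta_def
  using join_cong_index_kernel collapses_triple_index_kernel index_kernel_subset_cong
  by blast

lemma empty_in_index_lattice: "{} \<in> index_lattice n \<pi>"
proof -
  have "index_set n \<pi> (0, 0) = {}" using index_set_column by simp
  then show ?thesis by (force simp: grid_def)
qed

lemma index_lattice_saturated:
  assumes "X \<in> index_lattice n \<pi>"
  obtains a b where "(a, b) \<in> grid n" "saturated n \<pi> (a, b)" "X = index_set n \<pi> (a, b)"
proof -
  obtain x where x: "x \<in> grid n" "X = index_set n \<pi> x" using assms by blast
  have "\<exists>s\<in>grid n. saturated n \<pi> s \<and> (x, s) \<in> index_kernel n \<pi>"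
    using join_cong_index_kernel index_kernel_right_step index_kernel_up_step x(1)
    unfolding join_cong_def by (intro exists_saturated_equiv) auto
  then show ?thesis using that x by (auto simp: index_kernel_def)
qed

lemma covers_index_lattice:
  assumes "covers (index_lattice n \<pi>) (\<subseteq>) X Y"
  shows "\<exists>k. Y = insert k X"
proof -
  have XY: "X \<in> index_lattice n \<pi>" "Y \<in> index_lattice n \<pi>" "X \<subset> Y"
    and between: "\<And>Z. Z \<in> index_lattice n \<pi> \<Longrightarrow> X \<subseteq> Z \<Longrightarrow> Z \<subseteq> Y \<Longrightarrow> Z = X \<or> Z = Y"
    using assms unfolding covers_def by blast+
  obtain a b where ab: "(a, b) \<in> grid n" "saturated n \<pi> (a, b)" "X = index_set n \<pi> (a, b)"
    using index_lattice_saturated[OF XY(1)] .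
  obtain a' b' where ab': "(a', b') \<in> grid n" "saturated n \<pi> (a', b')" "Y = index_set n \<pi> (a', b')"
    using index_lattice_saturated[OF XY(2)] .
  have "a \<le> a'" "b \<le> b'"
    using saturated_greatest[OF ab'(2)] ab ab' XY(3) by (auto simp: grid_def)
  moreover have "(a, b) \<noteq> (a', b')" using ab(3) ab'(3) XY(3) by blast
  ultimately consider "a < n" "Suc a \<le> a'" | "b < n" "Suc b \<le> b'"
    using ab' by (force simp: grid_def)
  then show ?thesis
  proof cases
    case 1
    let ?Z = "index_set n \<pi> (Suc a, b)"
    have "?Z = insert (Suc a) X" using index_set_right_step[OF 1(1)] ab(3) by simp
    moreover have "?Z \<in> index_lattice n \<pi>" using 1 ab(1) by (auto simp: grid_def)
    moreover have "?Z \<subseteq> Y" using ab'(3) \<open>b \<le> b'\<close> 1(2) by (simp add: index_set_mono)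
    moreover have "Suc a \<notin> X" using ab(2,3) 1(1) by (simp add: saturated_def index_set_def)
    ultimately have "?Z = Y" using between[of ?Z] by blast
    then show ?thesis using \<open>?Z = insert (Suc a) X\<close> by blast
  next
    case 2
    let ?Z = "index_set n \<pi> (a, Suc b)"
    have "?Z = insert (inv \<pi> (Suc b)) X" using index_set_up_step[OF 2(1)] ab(3) by simp
    moreover have "?Z \<in> index_lattice n \<pi>" using 2 ab(1) by (auto simp: grid_def)
    moreover have "?Z \<subseteq> Y" using ab'(3) \<open>a \<le> a'\<close> 2(2) by (simp add: index_set_mono)
    moreover have "inv \<pi> (Suc b) \<notin> X"
      using ab(2,3) 2(1) by (simp add: saturated_def index_set_def)
    ultimately have "?Z = Y" using between[of ?Z] by blast
    then show ?thesis using \<open>?Z = insert (inv \<pi> (Suc b)) X\<close> by blast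
  qed
qed

lemma card_index_lattice_column_chain: "card ((\<lambda>a. index_set n \<pi> (a, 0)) ` {0..n}) = n + 1"
proof -
  have "(\<lambda>a. index_set n \<pi> (a, 0)) ` {0..n} = (\<lambda>a. {1..a}) ` {0..n}"
    using index_set_column by auto
  moreover have "inj_on (\<lambda>a. {1..a::nat}) {0..n}"
    by (rule inj_onI) (metis atLeastAtMost_iff card_atLeastAtMost diff_Suc_1)
  ultimately show ?thesis by (simp add: card_image)
qed

end

theorem lemma4p2:
  fixes n :: nat and \<pi> :: "nat \<Rightarrow> nat"
  assumes "\<pi> permutes {1..n}"
  shows "finite (quot n (beta n \<pi>))
    \<and> is_lattice (quot n (beta n \<pi>)) (quot_le (beta n \<pi>))
    \<and> slim (quot n (beta n \<pi>)) (quot_le (beta n \<pi>))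
    \<and> semimodular (quot n (beta n \<pi>)) (quot_le (beta n \<pi>))
    \<and> lattice_length (quot n (beta n \<pi>)) (quot_le (beta n \<pi>)) = n"
proof -
  let ?L = "index_lattice n \<pi>"
  interpret order_iso ?L "(\<subseteq>)" "quot n (beta n \<pi>)" "quot_le (beta n \<pi>)" "index_fiber n \<pi>"
    unfolding quot_def beta_eq_index_kernel[OF assms] by (rule order_iso_index_fiber)
  have "finite (quot n (beta n \<pi>))"
    using finite_index_lattice f_image by (metis finite_imageI)
  moreover have "is_lattice ?L (\<subseteq>)"
    using finite_index_lattice empty_in_index_lattice[OF assms] union_in_index_lattice
    by (rule is_lattice_if_union_closed)
  moreover have "slim ?L (\<subseteq>)"
    using index_lattice_column_chain index_lattice_row_chain join_irreducibles_index_lattice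
    by (rule slim_if_join_irreducibles_in_two_chains)
  moreover have "semimodular ?L (\<subseteq>)"
    using union_in_index_lattice covers_index_lattice[OF assms]
    by (rule semimodular_if_covers_insert)
  moreover have "lattice_length ?L (\<subseteq>) = n"
    using lattice_length_subsets_eq[OF _ index_lattice_subset_Pow index_lattice_column_chain]
      card_index_lattice_column_chain[OF assms] by simp
  ultimately show ?thesis
    by (simp add: is_lattice_iff slim_iff semimodular_iff lattice_length_eq)
qed

end
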